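(* Let $T_1=\{12|345,\,123|45\}$, $T_2=\{13|245,\,134|25\}$, $T_3=\{123|45,\,13|245\}$ be binary trees on leaves $\{1,\dots,5\}$. Under the JC model, $V_{T_3}\subseteq V_{T_1}\ast V_{T_2}$.
   Context: Trees are unrooted binary trees described by their nontrivial splits; $\Sigma(T)$ is the set of all splits of $T$ including trivial ones. With $G=\mathbb{Z}_2\times\mathbb{Z}_2$ and $A=(0,0)$, $C=(0,1)$, $G=(1,0)$, $T=(1,1)$, the JC model on $T$ in Fourier coordinates $q_{g_1\cdots g_5}$ is $q_{g_1\cdots g_5}=\prod_{A|B\in\Sigma(T)}a^{A|B}_{\sum_{i\in A}g_i}$ if $\sum g_i=0$ and $0$ otherwise, with $a^e_C=a^e_G=a^e_T$ for all splits $e$. $V_T\subseteq\mathbb{P}^{4^5-1}$ is the Zariski closure of the image as parameters range over complex numbers; $V\ast W$ is the join: the Zariski closure of the union of all lines meeting both $V$ and $W$. *)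

theory Defs
  imports Complex_Main
begin

datatype leaf = L1 | L2 | L3 | L4 | L5

lemma UNIV_leaf: "(UNIV :: leaf set) = {L1, L2, L3, L4, L5}"
  using leaf.exhaust by auto

instance leaf :: finite
  by standard (simp add: UNIV_leaf)

text \<open>G = Z2 x Z2 with A=(0,0), C=(0,1), G=(1,0), T=(1,1); True encodes 1.\<close>
type_synonym nuc = "bool \<times> bool"

definition nA :: nuc where "nA = (False, False)"
definition nC :: nuc where "nC = (False, True)"
definition nG :: nuc where "nG = (True, False)"
definition nT :: nuc where "nT = (True, True)"

text \<open>Group sum of the entries g_i, i in A (componentwise parity).\<close>
definition gsum :: "leaf set \<Rightarrow> (leaf \<Rightarrow> nuc) \<Rightarrow> nuc" where
  "gsum A g = (odd (card {i\<in>A. fst (g i)}), odd (card {i\<in>A. snd (g i)}))"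

type_synonym split = "leaf set set"

definition mk_split :: "leaf set \<Rightarrow> split" where
  "mk_split A = {A, - A}"

text \<open>Sigma(T): the nontrivial splits of T together with all trivial ones.\<close>
definition Sigma_splits :: "split set \<Rightarrow> split set" where
  "Sigma_splits T = T \<union> {mk_split {i} | i. True}"

text \<open>Coordinates q_{g1...g5} are indexed by g :: leaf => nuc (4^5 of them).
  For a split e, the sum over either side A in e agrees whenever the total sum is 0.\<close>
definition jc_map :: "split set \<Rightarrow> (split \<Rightarrow> nuc \<Rightarrow> complex) \<Rightarrow> ((leaf \<Rightarrow> nuc) \<Rightarrow> complex)" where
  "jc_map T a = (\<lambda>g. if gsum UNIV g = nA
      then (\<Prod>e\<in>Sigma_splits T. a e (gsum (SOME A. A \<in> e) g)) else 0)"

definition jc_params :: "split set \<Rightarrow> (split \<Rightarrow> nuc \<Rightarrow> complex) set" where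
  "jc_params T = {a. \<forall>e\<in>Sigma_splits T. a e nC = a e nG \<and> a e nG = a e nT}"

inductive_set poly_fun :: "(('i \<Rightarrow> complex) \<Rightarrow> complex) set" where
  const: "(\<lambda>x. c) \<in> poly_fun"
| coord: "(\<lambda>x. x i) \<in> poly_fun"
| add: "p \<in> poly_fun \<Longrightarrow> q \<in> poly_fun \<Longrightarrow> (\<lambda>x. p x + q x) \<in> poly_fun"
| mult: "p \<in> poly_fun \<Longrightarrow> q \<in> poly_fun \<Longrightarrow> (\<lambda>x. p x * q x) \<in> poly_fun"

definition zariski_closed :: "('i \<Rightarrow> complex) set \<Rightarrow> bool" where
  "zariski_closed Z \<longleftrightarrow> (\<exists>P \<subseteq> poly_fun. Z = {x. \<forall>p\<in>P. p x = 0})"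

definition zariski_closure :: "('i \<Rightarrow> complex) set \<Rightarrow> ('i \<Rightarrow> complex) set" where
  "zariski_closure S = \<Inter> {Z. zariski_closed Z \<and> S \<subseteq> Z}"

text \<open>Affine cone over V_T in C^(4^5).\<close>
definition V_JC :: "split set \<Rightarrow> ((leaf \<Rightarrow> nuc) \<Rightarrow> complex) set" where
  "V_JC T = zariski_closure (jc_map T ` jc_params T)"

text \<open>Affine cone over the join of the projective varieties with affine cones V, W.\<close>
definition join :: "('i \<Rightarrow> complex) set \<Rightarrow> ('i \<Rightarrow> complex) set \<Rightarrow> ('i \<Rightarrow> complex) set" where
  "join V W = zariski_closure {(\<lambda>i. v i + w i) | v w. v \<in> V \<and> w \<in> W}"

definition T1 :: "split set" where
  "T1 = {mk_split {L1, L2}, mk_split {L1, L2, L3}}"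
definition T2 :: "split set" where
  "T2 = {mk_split {L1, L3}, mk_split {L1, L3, L4}}"
definition T3 :: "split set" where
  "T3 = {mk_split {L1, L2, L3}, mk_split {L1, L3}}"

end

theory Submission
  imports Defs
begin

text \<open>
  Write f = 123|45 and h = 13|245 for the internal edges of T3 and split the parameter of f as
  a_f(X) = a_f(C) + (a_f(A) - a_f(C)) [X = A], which is possible because a_f(C) = a_f(G) = a_f(T).
  The constant summand makes the T3 monomial independent of the edge f: absorbing a_f(C) into
  leaf 1 and giving the new edge 134|25 of T2 the parameter 1, it is a point of the T2 model.
  In the other summand X = g1+g2+g3 = A, so the h-factor a_h(g1+g3) equals a_h(g2) and can be
  absorbed into leaf 2; giving the edge 12|345 of T1 the parameter 1, it is a point of the T1 model.
  Hence every point of the T3 parametrization is a sum of a T1-point and a T2-point, and the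
  inclusion passes to Zariski closures.
\<close>

lemma zariski_closure_subset: "S \<subseteq> zariski_closure S"
  unfolding zariski_closure_def by auto

lemma zariski_closure_least: "S \<subseteq> zariski_closure S' \<Longrightarrow> zariski_closure S \<subseteq> zariski_closure S'"
  unfolding zariski_closure_def by blast

lemma zariski_closure_subset_join:
  assumes "\<And>x. x \<in> S \<Longrightarrow> \<exists>v\<in>V. \<exists>w\<in>W. x = (\<lambda>i. v i + w i)"
  shows "zariski_closure S \<subseteq> join (zariski_closure V) (zariski_closure W)"
proof -
  have "S \<subseteq> {(\<lambda>i. v i + w i) | v w. v \<in> zariski_closure V \<and> w \<in> zariski_closure W}"
  proof
    fix x
    assume "x \<in> S"
    then obtain v w where "v \<in> V" "w \<in> W" "x = (\<lambda>i. v i + w i)"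
      using assms by blast
    then show "x \<in> {(\<lambda>i. v i + w i) | v w. v \<in> zariski_closure V \<and> w \<in> zariski_closure W}"
      using zariski_closure_subset by blast
  qed
  then show ?thesis
    unfolding join_def by (meson zariski_closure_subset zariski_closure_least subset_trans)
qed

definition nuc_add :: "nuc \<Rightarrow> nuc \<Rightarrow> nuc" where
  "nuc_add x y = (fst x \<noteq> fst y, snd x \<noteq> snd y)"

lemma nuc_add_eq_nA_iff: "nuc_add x y = nA \<longleftrightarrow> x = y"
  unfolding nuc_add_def nA_def by (cases x; cases y) auto

lemma gsum_empty [simp]: "gsum {} g = nA"
  unfolding gsum_def nA_def by simp

lemma gsum_singleton [simp]: "gsum {i} g = g i"
proof -
  have singleton_filter: "{j \<in> {i}. P j} = (if P i then {i} else {})" for P by auto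
  show ?thesis
    unfolding gsum_def singleton_filter by (cases "g i") auto
qed

lemma gsum_Un_disjoint:
  assumes "A \<inter> B = {}"
  shows "gsum (A \<union> B) g = nuc_add (gsum A g) (gsum B g)"
proof -
  have card_Un: "card {i \<in> A \<union> B. P i} = card {i \<in> A. P i} + card {i \<in> B. P i}" for P
  proof -
    have "{i \<in> A \<union> B. P i} = {i \<in> A. P i} \<union> {i \<in> B. P i}" by auto
    then show ?thesis
      using assms by (simp add: card_Un_disjoint disjoint_iff)
  qed
  show ?thesis
    unfolding gsum_def nuc_add_def card_Un by simp
qed

lemma gsum_insert: "i \<notin> A \<Longrightarrow> gsum (insert i A) g = nuc_add (g i) (gsum A g)"
  using gsum_Un_disjoint[of "{i}" A g] by simp

lemma gsum_Compl:
  assumes "gsum UNIV g = nA"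
  shows "gsum (- A) g = gsum A g"
proof -
  have "nuc_add (gsum A g) (gsum (- A) g) = nA"
    using gsum_Un_disjoint[of A "- A" g] assms by simp
  then show ?thesis
    by (simp add: nuc_add_eq_nA_iff)
qed

lemma gsum_some_side:
  assumes "gsum UNIV g = nA"
  shows "gsum (SOME A. A \<in> mk_split B) g = gsum B g"
proof -
  have "(SOME A. A \<in> mk_split B) \<in> mk_split B"
    by (rule someI) (auto simp: mk_split_def)
  then show ?thesis
    using gsum_Compl[OF assms, of B] unfolding mk_split_def by auto
qed

lemma leaf_set_eq_iff:
  "A = B \<longleftrightarrow> (L1 \<in> A \<longleftrightarrow> L1 \<in> B) \<and> (L2 \<in> A \<longleftrightarrow> L2 \<in> B) \<and> (L3 \<in> A \<longleftrightarrow> L3 \<in> B)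
      \<and> (L4 \<in> A \<longleftrightarrow> L4 \<in> B) \<and> (L5 \<in> A \<longleftrightarrow> L5 \<in> B)"
  (is "_ \<longleftrightarrow> ?same_members")
proof
  assume ?same_members
  show "A = B"
  proof (rule set_eqI)
    fix x
    show "x \<in> A \<longleftrightarrow> x \<in> B"
      using \<open>?same_members\<close> by (cases x) auto
  qed
qed simp

lemma mk_split_eq_iff: "mk_split A = mk_split B \<longleftrightarrow> A = B \<or> A = - B"
  unfolding mk_split_def by (auto simp: doubleton_eq_iff)

lemma prod_UNIV_leaf: "(\<Prod>i\<in>UNIV. f i) = f L1 * f L2 * f L3 * f L4 * f L5"
  by (simp add: UNIV_leaf mult.assoc)

lemma inj_trivial_split: "inj (\<lambda>i. mk_split {i})"
proof (rule injI)
  fix i j :: leaf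
  assume "mk_split {i} = mk_split {j}"
  then show "i = j"
    by (cases i; cases j) (simp_all add: mk_split_eq_iff leaf_set_eq_iff)
qed

lemma Sigma_splits_eq: "Sigma_splits T = T \<union> range (\<lambda>i. mk_split {i})"
  unfolding Sigma_splits_def by auto

lemma jc_map_two_splits:
  assumes "mk_split A \<notin> range (\<lambda>i. mk_split {i})" "mk_split B \<notin> range (\<lambda>i. mk_split {i})"
    and "mk_split A \<noteq> mk_split B"
    and "gsum UNIV g = nA"
  shows "jc_map {mk_split A, mk_split B} a g
    = a (mk_split A) (gsum A g) * a (mk_split B) (gsum B g) * (\<Prod>i\<in>UNIV. a (mk_split {i}) (g i))"
proof -
  have "Sigma_splits {mk_split A, mk_split B}
      = insert (mk_split A) (insert (mk_split B) (range (\<lambda>i. mk_split {i})))"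
    unfolding Sigma_splits_eq by auto
  moreover have "(\<Prod>e\<in>range (\<lambda>i. mk_split {i}). a e (gsum (SOME A. A \<in> e) g))
      = (\<Prod>i\<in>UNIV. a (mk_split {i}) (g i))"
    by (simp add: prod.reindex[OF inj_trivial_split] gsum_some_side[OF assms(4)])
  ultimately show ?thesis
    using assms unfolding jc_map_def by (simp add: gsum_some_side mult.assoc)
qed

lemma jc_params_nonzero:
  assumes "a \<in> jc_params T" "e \<in> Sigma_splits T" "n \<noteq> nA"
  shows "a e n = a e nC"
proof -
  obtain x y where n: "n = (x, y)" by (cases n)
  show ?thesis
    using assms unfolding jc_params_def nA_def nC_def nG_def nT_def n
    by (cases x; cases y) auto
qed

lemma jc_map_T3_decompose:
  assumes a: "a \<in> jc_params T3"
  defines "f \<equiv> mk_split {L1, L2, L3}" and "h \<equiv> mk_split {L1, L3}"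
  defines "a1 \<equiv> \<lambda>e n. if e = mk_split {L1, L2} then 1
      else if e = f then (if n = nA then a f nA - a f nC else 0)
      else if e = mk_split {L2} then a e n * a h n
      else a e n"
    and "a2 \<equiv> \<lambda>e n. if e = mk_split {L1, L3, L4} then 1
      else if e = mk_split {L1} then a f nC * a e n
      else a e n"
  shows "a1 \<in> jc_params T1" and "a2 \<in> jc_params T2"
    and "jc_map T3 a = (\<lambda>g. jc_map T1 a1 g + jc_map T2 a2 g)"
proof -
  have trivial_split_eq: "range (\<lambda>i. mk_split {i})
      = {mk_split {L1}, mk_split {L2}, mk_split {L3}, mk_split {L4}, mk_split {L5}}"
    by (simp add: UNIV_leaf)
  have f_in: "f \<in> Sigma_splits T3" and h_in: "h \<in> Sigma_splits T3"
    unfolding f_def h_def T3_def Sigma_splits_def by simp_all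
  have a_params: "a e nC = a e nG" "a e nG = a e nT" if "e \<in> Sigma_splits T3" for e
    using a that unfolding jc_params_def by blast+
  have nonzero: "nC \<noteq> nA" "nG \<noteq> nA" "nT \<noteq> nA"
    unfolding nA_def nC_def nG_def nT_def by simp_all
  show "a1 \<in> jc_params T1"
    unfolding jc_params_def mem_Collect_eq
  proof
    fix e
    assume "e \<in> Sigma_splits T1"
    then have "e = mk_split {L1, L2} \<or> e = f \<or> e \<in> Sigma_splits T3"
      unfolding Sigma_splits_eq T1_def T3_def f_def by auto
    then show "a1 e nC = a1 e nG \<and> a1 e nG = a1 e nT"
      unfolding a1_def using a_params a_params[OF h_in] nonzero by auto
  qed
  show "a2 \<in> jc_params T2"
    unfolding jc_params_def mem_Collect_eq
  proof
    fix e
    assume "e \<in> Sigma_splits T2"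
    then have "e = mk_split {L1, L3, L4} \<or> e \<in> Sigma_splits T3"
      unfolding Sigma_splits_eq T2_def T3_def by auto
    then show "a2 e nC = a2 e nG \<and> a2 e nG = a2 e nT"
      unfolding a2_def using a_params by auto
  qed
  show "jc_map T3 a = (\<lambda>g. jc_map T1 a1 g + jc_map T2 a2 g)"
  proof
    fix g
    show "jc_map T3 a g = jc_map T1 a1 g + jc_map T2 a2 g"
    proof (cases "gsum UNIV g = nA")
      case False
      then show ?thesis unfolding jc_map_def by simp
    next
      case total: True
      define X where "X = gsum {L1, L2, L3} g"
      define Y where "Y = gsum {L1, L3} g"
      have X_Y: "X = nuc_add (g L2) Y"
        unfolding X_def Y_def by (subst insert_commute) (simp add: gsum_insert)
      have a_f: "a f X = (if X = nA then a f nA - a f nC else 0) + a f nC"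
        using jc_params_nonzero[OF a f_in, of X] by simp
      have h_factor: "X = nA \<Longrightarrow> a h Y = a h (g L2)"
        using X_Y by (simp add: nuc_add_eq_nA_iff)
      have T3: "jc_map T3 a g = a f X * a h Y * (\<Prod>i\<in>UNIV. a (mk_split {i}) (g i))"
        unfolding T3_def X_def Y_def f_def h_def
        by (rule jc_map_two_splits[OF _ _ _ total])
          (auto simp: trivial_split_eq mk_split_eq_iff leaf_set_eq_iff)
      have T1: "jc_map T1 a1 g = (if X = nA then a f nA - a f nC else 0) * a h (g L2)
          * (\<Prod>i\<in>UNIV. a (mk_split {i}) (g i))"
        unfolding T1_def
        by (subst jc_map_two_splits[OF _ _ _ total])
          (auto simp: trivial_split_eq mk_split_eq_iff leaf_set_eq_iff prod_UNIV_leaf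
            a1_def f_def h_def X_def)
      have T2: "jc_map T2 a2 g = a f nC * a h Y * (\<Prod>i\<in>UNIV. a (mk_split {i}) (g i))"
        unfolding T2_def
        by (subst jc_map_two_splits[OF _ _ _ total])
          (auto simp: trivial_split_eq mk_split_eq_iff leaf_set_eq_iff prod_UNIV_leaf
            a2_def f_def h_def Y_def)
      show ?thesis
        unfolding T3 T1 T2 a_f using h_factor by (simp add: algebra_simps)
    qed
  qed
qed

theorem theorem5:
  shows "V_JC T3 \<subseteq> join (V_JC T1) (V_JC T2)"
  unfolding V_JC_def
proof (rule zariski_closure_subset_join)
  fix x
  assume "x \<in> jc_map T3 ` jc_params T3"
  then obtain a where "a \<in> jc_params T3" and "x = jc_map T3 a" by blast
  then show "\<exists>v\<in>jc_map T1 ` jc_params T1. \<exists>w\<in>jc_map T2 ` jc_params T2. x = (\<lambda>i. v i + w i)"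
    using jc_map_T3_decompose by blast
qed

end
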